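(* Let $n\ge 1$ and let $M$ be an $R[n]$-module. Then $M$ is isomorphic, as an $R[n]$-module, to a neural ring $R_\mathcal C$ for some code $\mathcal C\subseteq\{0,1\}^n$ if and only if $M$ has an $\mathbb F_2$-basis $\rho_1,\dots,\rho_d$ such that: (1) for all $i\in[n]$ and $j\in[d]$, $x_i\cdot\rho_j\in\{\rho_j,0\}$; (2) for all distinct $j,k\in[d]$ there exists at least one $i\in[n]$ such that exactly one of $x_i\cdot\rho_j$ and $x_i\cdot\rho_k$ is $0$.
   Context: A neural code on $n$ neurons is a subset $\mathcal C\subseteq\{0,1\}^n$. Its ideal is $I_\mathcal C=\{f\in\mathbb F_2[x_1,\dots,x_n]: f(c)=0 \text{ for all } c\in\mathcal C\}$ and its neural ring is $R_\mathcal C=\mathbb F_2[x_1,\dots,x_n]/I_\mathcal C$, identified with the ring of all functions $\mathcal C\to\{0,1\}=\mathbb F_2$. Write $R[n]=\mathbb F_2[x_1,\dots,x_n]/\langle x_i^2-x_i : i\in[n]\rangle$, the neural ring of the full code $\{0,1\}^n$. For $\mathcal C\subseteq\{0,1\}^n$, $R_\mathcal C$ is an $R[n]$-module via $(r\cdot f)(c)=r(c)f(c)$ for $c\in\mathcal C$. *)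

theory Defs
  imports "HOL-Algebra.Module" "HOL-Algebra.FiniteProduct"
begin

text \<open>Binary words of length n: functions nat => bool vanishing from index n on.
  Neuron i (1-based in the paper) corresponds to index i-1 here.\<close>
definition cube :: "nat \<Rightarrow> (nat \<Rightarrow> bool) set" where
  "cube n = {c. \<forall>i\<ge>n. \<not> c i}"

text \<open>Functions on a code C with values in F2 = bool (True = 1), extended by False off C.\<close>
definition fun_on :: "(nat \<Rightarrow> bool) set \<Rightarrow> ((nat \<Rightarrow> bool) \<Rightarrow> bool) set" where
  "fun_on C = {f. \<forall>c. c \<notin> C \<longrightarrow> \<not> f c}"

text \<open>The neural ring R_C, identified with the ring of all functions C -> F2
  (addition = xor, multiplication = and).\<close>
definition neural_ring :: "(nat \<Rightarrow> bool) set \<Rightarrow> ((nat \<Rightarrow> bool) \<Rightarrow> bool) ring" where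
  "neural_ring C = \<lparr> carrier = fun_on C,
      mult = (\<lambda>f g c. f c \<and> g c),
      one = (\<lambda>c. c \<in> C),
      zero = (\<lambda>c. False),
      add = (\<lambda>f g c. f c \<noteq> g c) \<rparr>"

definition Rn :: "nat \<Rightarrow> ((nat \<Rightarrow> bool) \<Rightarrow> bool) ring" where
  "Rn n = neural_ring (cube n)"

definition xvar :: "nat \<Rightarrow> nat \<Rightarrow> ((nat \<Rightarrow> bool) \<Rightarrow> bool)" where
  "xvar n i = (\<lambda>c. c \<in> cube n \<and> c i)"

definition neural_module ::
  "nat \<Rightarrow> (nat \<Rightarrow> bool) set \<Rightarrow> ((nat \<Rightarrow> bool) \<Rightarrow> bool, (nat \<Rightarrow> bool) \<Rightarrow> bool) module" where
  "neural_module n C = \<lparr> carrier = fun_on C,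
      mult = (\<lambda>f g c. f c \<and> g c),
      one = (\<lambda>c. c \<in> C),
      zero = (\<lambda>c. False),
      add = (\<lambda>f g c. f c \<noteq> g c),
      smult = (\<lambda>r f c. c \<in> C \<and> r c \<and> f c) \<rparr>"

definition module_iso ::
  "('r, 'm) ring_scheme \<Rightarrow> ('r, 'a, 'x) module_scheme \<Rightarrow> ('r, 'b, 'y) module_scheme
     \<Rightarrow> ('a \<Rightarrow> 'b) \<Rightarrow> bool" where
  "module_iso R M N f \<longleftrightarrow>
     bij_betw f (carrier M) (carrier N) \<and>
     (\<forall>x\<in>carrier M. \<forall>y\<in>carrier M. f (x \<oplus>\<^bsub>M\<^esub> y) = f x \<oplus>\<^bsub>N\<^esub> f y) \<and>
     (\<forall>r\<in>carrier R. \<forall>x\<in>carrier M. f (r \<odot>\<^bsub>M\<^esub> x) = r \<odot>\<^bsub>N\<^esub> f x)"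

definition f2_const :: "('r, 'm) ring_scheme \<Rightarrow> bool \<Rightarrow> 'r" where
  "f2_const R b = (if b then \<one>\<^bsub>R\<^esub> else \<zero>\<^bsub>R\<^esub>)"

text \<open>rho 0, ..., rho (d-1) is an F2-basis of the R-module M (M viewed as an F2-vector
  space by restriction of scalars along F2 -> R): every element is a unique
  F2-linear combination of the rho j.\<close>
definition f2_basis ::
  "('r, 'm) ring_scheme \<Rightarrow> ('r, 'a, 'x) module_scheme \<Rightarrow> nat \<Rightarrow> (nat \<Rightarrow> 'a) \<Rightarrow> bool" where
  "f2_basis R M d \<rho> \<longleftrightarrow>
     (\<forall>j<d. \<rho> j \<in> carrier M) \<and>
     (\<forall>m\<in>carrier M. \<exists>!a. a \<in> extensional {..<d} \<and>
        m = finsum M (\<lambda>j. f2_const R (a j) \<odot>\<^bsub>M\<^esub> \<rho> j) {..<d})"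

end

theory Submission
  imports Defs
begin

text \<open>
  Every R[n]-module is an F2-vector space, since 1 + 1 = 0 in R[n]. If each x_i maps a basis
  vector \<rho>_j to \<rho>_j or 0, let c_j be the codeword of those i with x_i \<rho>_j = \<rho>_j. The product over i
  of x_i or 1 + x_i (according to c_j) is the indicator of the point c_j, which fixes \<rho>_j; hence
  every r \<in> R[n] acts on \<rho>_j as the scalar r(c_j). This is exactly how R[n] acts on the indicator
  of c_j in R_C, and the separation condition says that the c_j are distinct. Two modules with
  bases on which R[n] acts through the same scalars are isomorphic by matching coordinates, so
  M is isomorphic to R_C for C = {c_j}. Conversely, the indicators of the codewords of C form
  such a basis of R_C, and it can be pulled back along any isomorphism.
\<close>

section \<open>F2-linear combinations\<close>

definition f2_comb ::
  "('r, 'm) ring_scheme \<Rightarrow> ('r, 'a, 'x) module_scheme \<Rightarrow> nat \<Rightarrow> (nat \<Rightarrow> 'a) \<Rightarrow> (nat \<Rightarrow> bool) \<Rightarrow> 'a"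
  where "f2_comb R M d \<rho> a = finsum M (\<lambda>j. f2_const R (a j) \<odot>\<^bsub>M\<^esub> \<rho> j) {..<d}"

definition f2_coords ::
  "('r, 'm) ring_scheme \<Rightarrow> ('r, 'a, 'x) module_scheme \<Rightarrow> nat \<Rightarrow> (nat \<Rightarrow> 'a) \<Rightarrow> 'a \<Rightarrow> nat \<Rightarrow> bool"
  where "f2_coords R M d \<rho> m = (THE a. a \<in> extensional {..<d} \<and> m = f2_comb R M d \<rho> a)"

lemma f2_basis_iff_f2_comb:
  "f2_basis R M d \<rho> \<longleftrightarrow> (\<forall>j<d. \<rho> j \<in> carrier M) \<and>
     (\<forall>m\<in>carrier M. \<exists>!a. a \<in> extensional {..<d} \<and> m = f2_comb R M d \<rho> a)"
  by (simp add: f2_basis_def f2_comb_def)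

lemma f2_basis_closed: "f2_basis R M d \<rho> \<Longrightarrow> j < d \<Longrightarrow> \<rho> j \<in> carrier M"
  by (simp add: f2_basis_def)

lemma (in ring) f2_const_closed [simp]: "f2_const R b \<in> carrier R"
  by (simp add: f2_const_def)

lemma (in ring) f2_const_mult: "f2_const R a \<otimes> f2_const R b = f2_const R (a \<and> b)"
  by (simp add: f2_const_def)

lemma (in ring) f2_const_add:
  "\<one> \<oplus> \<one> = \<zero> \<Longrightarrow> f2_const R a \<oplus> f2_const R b = f2_const R (a \<noteq> b)"
  by (simp add: f2_const_def)

context module
begin

lemma f2_comb_closed:
  "\<forall>j<d. \<rho> j \<in> carrier M \<Longrightarrow> f2_comb R M d \<rho> a \<in> carrier M"
  by (auto simp: f2_comb_def intro: finsum_closed)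

lemma f2_comb_cong:
  "\<forall>j<d. \<rho> j \<in> carrier M \<Longrightarrow> \<forall>j<d. a j = b j \<Longrightarrow> f2_comb R M d \<rho> a = f2_comb R M d \<rho> b"
  unfolding f2_comb_def by (rule finsum_cong') auto

lemma f2_comb_add:
  assumes "\<one> \<oplus> \<one> = \<zero>" and "\<forall>j<d. \<rho> j \<in> carrier M"
  shows "f2_comb R M d \<rho> a \<oplus>\<^bsub>M\<^esub> f2_comb R M d \<rho> b = f2_comb R M d \<rho> (\<lambda>j. a j \<noteq> b j)"
proof -
  have "f2_comb R M d \<rho> a \<oplus>\<^bsub>M\<^esub> f2_comb R M d \<rho> b =
      (\<Oplus>\<^bsub>M\<^esub>j\<in>{..<d}. f2_const R (a j) \<odot>\<^bsub>M\<^esub> \<rho> j \<oplus>\<^bsub>M\<^esub> f2_const R (b j) \<odot>\<^bsub>M\<^esub> \<rho> j)"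
    unfolding f2_comb_def using assms(2) by (intro finsum_addf[symmetric]) auto
  also have "\<dots> = f2_comb R M d \<rho> (\<lambda>j. a j \<noteq> b j)"
    unfolding f2_comb_def using assms
    by (intro finsum_cong') (auto simp: smult_l_distr[symmetric] f2_const_add)
  finally show ?thesis .
qed

lemma f2_comb_smult:
  assumes "\<forall>j<d. \<rho> j \<in> carrier M" and r: "r \<in> carrier R"
    and diag: "\<forall>j<d. r \<odot>\<^bsub>M\<^esub> \<rho> j = f2_const R (\<chi> j) \<odot>\<^bsub>M\<^esub> \<rho> j"
  shows "r \<odot>\<^bsub>M\<^esub> f2_comb R M d \<rho> a = f2_comb R M d \<rho> (\<lambda>j. a j \<and> \<chi> j)"
proof -
  have "r \<odot>\<^bsub>M\<^esub> (f2_const R c \<odot>\<^bsub>M\<^esub> \<rho> j) = f2_const R (c \<and> \<chi> j) \<odot>\<^bsub>M\<^esub> \<rho> j"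
    if "j < d" for c j
  proof -
    have "r \<odot>\<^bsub>M\<^esub> (f2_const R c \<odot>\<^bsub>M\<^esub> \<rho> j) = (f2_const R c \<otimes> r) \<odot>\<^bsub>M\<^esub> \<rho> j"
      using assms(1) r that by (simp add: smult_assoc1[symmetric] m_comm)
    also have "\<dots> = f2_const R c \<odot>\<^bsub>M\<^esub> (f2_const R (\<chi> j) \<odot>\<^bsub>M\<^esub> \<rho> j)"
      using assms(1) r diag that by (simp add: smult_assoc1)
    also have "\<dots> = f2_const R (c \<and> \<chi> j) \<odot>\<^bsub>M\<^esub> \<rho> j"
      using assms(1) that by (simp add: smult_assoc1[symmetric] f2_const_mult)
    finally show ?thesis .
  qed
  then show ?thesis
    unfolding f2_comb_def using assms(1) r
    by (subst finsum_smult_ldistr) (auto intro: finsum_cong')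
qed

end

section \<open>Transfer along module isomorphisms\<close>

lemma module_iso_zero:
  assumes "module R M" "module R N" "module_iso R M N f"
  shows "f \<zero>\<^bsub>M\<^esub> = \<zero>\<^bsub>N\<^esub>"
proof -
  interpret M: module R M by (rule assms(1))
  interpret N: module R N by (rule assms(2))
  have "f \<zero>\<^bsub>M\<^esub> \<in> carrier N"
    using assms(3) unfolding module_iso_def bij_betw_def by blast
  moreover have "f \<zero>\<^bsub>M\<^esub> = \<zero>\<^bsub>R\<^esub> \<odot>\<^bsub>N\<^esub> f \<zero>\<^bsub>M\<^esub>"
    using assms(3) M.smult_l_null[of "\<zero>\<^bsub>M\<^esub>"] unfolding module_iso_def by force
  ultimately show ?thesis
    by simp
qed

lemma module_iso_finsum:
  assumes "module R M" "module R N" "module_iso R M N f" "g \<in> A \<rightarrow> carrier M"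
  shows "f (finsum M g A) = finsum N (f \<circ> g) A"
proof -
  interpret M: module R M by (rule assms(1))
  interpret N: module R N by (rule assms(2))
  have into: "f x \<in> carrier N" if "x \<in> carrier M" for x
    using assms(3) that unfolding module_iso_def bij_betw_def by blast
  from assms(4) show ?thesis
  proof (induction A rule: infinite_finite_induct)
    case (insert a A)
    have "f (finsum M g (insert a A)) = f (g a \<oplus>\<^bsub>M\<^esub> finsum M g A)"
      using insert by simp
    also have "\<dots> = f (g a) \<oplus>\<^bsub>N\<^esub> finsum N (f \<circ> g) A"
      using insert assms(3) unfolding module_iso_def by (simp add: comp_def)
    also have "\<dots> = finsum N (f \<circ> g) (insert a A)"
      using insert into by (simp add: Pi_def)
    finally show ?case .
  qed (simp_all add: module_iso_zero[OF assms(1-3)])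
qed

lemma f2_basis_transfer:
  assumes "module R M" "module R N" "module_iso R M N f" "f2_basis R N d \<sigma>"
    and "\<forall>j<d. \<rho> j \<in> carrier M \<and> f (\<rho> j) = \<sigma> j"
  shows "f2_basis R M d \<rho>"
proof -
  interpret M: module R M by (rule assms(1))
  interpret N: module R N by (rule assms(2))
  have inj: "inj_on f (carrier M)" and into: "\<And>x. x \<in> carrier M \<Longrightarrow> f x \<in> carrier N"
    using assms(3) unfolding module_iso_def bij_betw_def by auto
  have \<rho>: "\<forall>j<d. \<rho> j \<in> carrier M"
    using assms(5) by blast
  have \<sigma>: "\<forall>j<d. \<sigma> j \<in> carrier N"
    using assms(5) into by metis
  have comb: "f (f2_comb R M d \<rho> a) = f2_comb R N d \<sigma> a" for a
  proof -
    have "f (f2_comb R M d \<rho> a) = finsum N (\<lambda>j. f (f2_const R (a j) \<odot>\<^bsub>M\<^esub> \<rho> j)) {..<d}"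
      unfolding f2_comb_def using \<rho> by (subst module_iso_finsum[OF assms(1-3)]) (auto simp: comp_def)
    also have "\<dots> = f2_comb R N d \<sigma> a"
      unfolding f2_comb_def using assms(3,5) \<sigma>
      by (intro N.finsum_cong') (auto simp: module_iso_def)
    finally show ?thesis .
  qed
  have "m = f2_comb R M d \<rho> a \<longleftrightarrow> f m = f2_comb R N d \<sigma> a" if "m \<in> carrier M" for m a
    using inj_on_eq_iff[OF inj that M.f2_comb_closed[OF \<rho>]] comb by simp
  then show ?thesis
    using assms(4) \<rho> into by (simp add: f2_basis_iff_f2_comb)
qed

section \<open>Coordinates with respect to an F2-basis\<close>

locale f2_based_module = module +
  fixes d :: nat and \<rho> :: "nat \<Rightarrow> 'c"
  assumes f2_basis: "f2_basis R M d \<rho>"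
begin

lemma basis_closed: "\<forall>j<d. \<rho> j \<in> carrier M"
  using f2_basis by (simp add: f2_basis_def)

lemma f2_coords:
  assumes "m \<in> carrier M"
  shows "f2_coords R M d \<rho> m \<in> extensional {..<d}" and "f2_comb R M d \<rho> (f2_coords R M d \<rho> m) = m"
proof -
  have "\<exists>!a. a \<in> extensional {..<d} \<and> m = f2_comb R M d \<rho> a"
    using f2_basis assms by (simp add: f2_basis_iff_f2_comb)
  then have "f2_coords R M d \<rho> m \<in> extensional {..<d} \<and> m = f2_comb R M d \<rho> (f2_coords R M d \<rho> m)"
    unfolding f2_coords_def by (rule theI')
  then show "f2_coords R M d \<rho> m \<in> extensional {..<d}" "f2_comb R M d \<rho> (f2_coords R M d \<rho> m) = m"
    by simp_all
qed

lemma f2_coords_f2_comb: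
  assumes "a \<in> extensional {..<d}"
  shows "f2_coords R M d \<rho> (f2_comb R M d \<rho> a) = a"
proof -
  have "\<exists>!b. b \<in> extensional {..<d} \<and> f2_comb R M d \<rho> a = f2_comb R M d \<rho> b"
    using f2_basis f2_comb_closed[OF basis_closed] by (simp add: f2_basis_iff_f2_comb)
  then show ?thesis
    unfolding f2_coords_def using assms by (auto intro: the1_equality)
qed

lemma f2_comb_inject:
  "a \<in> extensional {..<d} \<Longrightarrow> b \<in> extensional {..<d} \<Longrightarrow>
    f2_comb R M d \<rho> a = f2_comb R M d \<rho> b \<Longrightarrow> a = b"
  by (metis f2_coords_f2_comb)

lemma basis_nonzero:
  assumes "j < d"
  shows "\<rho> j \<noteq> \<zero>\<^bsub>M\<^esub>"
proof
  assume zero: "\<rho> j = \<zero>\<^bsub>M\<^esub>"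
  have comb_zero: "f2_comb R M d \<rho> a = \<zero>\<^bsub>M\<^esub>" if "\<forall>k<d. a k \<longrightarrow> k = j" for a
    unfolding f2_comb_def using that zero basis_closed
    by (intro add.finprod_one_eqI) (auto simp: f2_const_def)
  have "restrict (\<lambda>k. k = j) {..<d} = restrict (\<lambda>k. False) {..<d}"
    by (rule f2_comb_inject) (simp_all add: comb_zero)
  then show False
    using assms by (auto dest: fun_cong[where x = j])
qed

lemma f2_coords_add:
  assumes "\<one> \<oplus> \<one> = \<zero>" and "x \<in> carrier M" "y \<in> carrier M" "j < d"
  shows "f2_coords R M d \<rho> (x \<oplus>\<^bsub>M\<^esub> y) j = (f2_coords R M d \<rho> x j \<noteq> f2_coords R M d \<rho> y j)"
proof -
  let ?a = "restrict (\<lambda>k. f2_coords R M d \<rho> x k \<noteq> f2_coords R M d \<rho> y k) {..<d}"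
  have "x \<oplus>\<^bsub>M\<^esub> y =
      f2_comb R M d \<rho> (f2_coords R M d \<rho> x) \<oplus>\<^bsub>M\<^esub> f2_comb R M d \<rho> (f2_coords R M d \<rho> y)"
    using assms(2,3) by (simp add: f2_coords(2))
  also have "\<dots> = f2_comb R M d \<rho> ?a"
    unfolding f2_comb_add[OF assms(1) basis_closed] by (rule f2_comb_cong[OF basis_closed]) simp
  finally have "x \<oplus>\<^bsub>M\<^esub> y = f2_comb R M d \<rho> ?a" .
  then show ?thesis
    using f2_coords_f2_comb assms(4) by simp
qed

lemma f2_coords_smult:
  assumes "r \<in> carrier R" "x \<in> carrier M" "j < d"
    and "\<forall>j<d. r \<odot>\<^bsub>M\<^esub> \<rho> j = f2_const R (\<chi> j) \<odot>\<^bsub>M\<^esub> \<rho> j"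
  shows "f2_coords R M d \<rho> (r \<odot>\<^bsub>M\<^esub> x) j = (f2_coords R M d \<rho> x j \<and> \<chi> j)"
proof -
  let ?a = "restrict (\<lambda>k. f2_coords R M d \<rho> x k \<and> \<chi> k) {..<d}"
  have "r \<odot>\<^bsub>M\<^esub> x = r \<odot>\<^bsub>M\<^esub> f2_comb R M d \<rho> (f2_coords R M d \<rho> x)"
    using assms(2) by (simp add: f2_coords(2))
  also have "\<dots> = f2_comb R M d \<rho> ?a"
    unfolding f2_comb_smult[OF basis_closed assms(1,4)] by (rule f2_comb_cong[OF basis_closed]) simp
  finally have "r \<odot>\<^bsub>M\<^esub> x = f2_comb R M d \<rho> ?a" .
  then show ?thesis
    using f2_coords_f2_comb assms(3) by simp
qed

lemma module_iso_f2_coords: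
  assumes char2: "\<one> \<oplus> \<one> = \<zero>"
    and N: "f2_based_module R N d \<sigma>"
    and diag_M: "\<forall>r\<in>carrier R. \<forall>j<d. r \<odot>\<^bsub>M\<^esub> \<rho> j = f2_const R (\<chi> r j) \<odot>\<^bsub>M\<^esub> \<rho> j"
    and diag_N: "\<forall>r\<in>carrier R. \<forall>j<d. r \<odot>\<^bsub>N\<^esub> \<sigma> j = f2_const R (\<chi> r j) \<odot>\<^bsub>N\<^esub> \<sigma> j"
  shows "module_iso R M N (\<lambda>m. f2_comb R N d \<sigma> (f2_coords R M d \<rho> m))"
proof -
  interpret N: f2_based_module R N d \<sigma> by (rule N)
  let ?f = "\<lambda>m. f2_comb R N d \<sigma> (f2_coords R M d \<rho> m)"
  let ?g = "\<lambda>h. f2_comb R M d \<rho> (f2_coords R N d \<sigma> h)"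
  have "bij_betw ?f (carrier M) (carrier N)"
  proof (rule bij_betw_byWitness[where f' = ?g])
    show "\<forall>m\<in>carrier M. ?g (?f m) = m"
      by (simp add: N.f2_coords_f2_comb f2_coords)
    show "\<forall>h\<in>carrier N. ?f (?g h) = h"
      by (simp add: f2_coords_f2_comb N.f2_coords)
    show "?f ` carrier M \<subseteq> carrier N" "?g ` carrier N \<subseteq> carrier M"
      using N.f2_comb_closed[OF N.basis_closed] f2_comb_closed[OF basis_closed] by auto
  qed
  moreover have "?f (x \<oplus>\<^bsub>M\<^esub> y) = ?f x \<oplus>\<^bsub>N\<^esub> ?f y" if "x \<in> carrier M" "y \<in> carrier M" for x y
    unfolding N.f2_comb_add[OF char2 N.basis_closed]
    by (rule N.f2_comb_cong[OF N.basis_closed]) (simp add: f2_coords_add[OF char2 that])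
  moreover have "?f (r \<odot>\<^bsub>M\<^esub> x) = r \<odot>\<^bsub>N\<^esub> ?f x" if "r \<in> carrier R" "x \<in> carrier M" for r x
  proof -
    have rM: "\<forall>j<d. r \<odot>\<^bsub>M\<^esub> \<rho> j = f2_const R (\<chi> r j) \<odot>\<^bsub>M\<^esub> \<rho> j"
      and rN: "\<forall>j<d. r \<odot>\<^bsub>N\<^esub> \<sigma> j = f2_const R (\<chi> r j) \<odot>\<^bsub>N\<^esub> \<sigma> j"
      using diag_M diag_N that(1) by blast+
    show ?thesis
      unfolding N.f2_comb_smult[OF N.basis_closed that(1) rN]
      by (intro N.f2_comb_cong[OF N.basis_closed]) (simp add: f2_coords_smult[OF that _ rM])
  qed
  ultimately show ?thesis
    unfolding module_iso_def by blast
qed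

end

section \<open>Neural rings and codeword bases\<close>

lemma cring_neural_ring: "cring (neural_ring C)"
proof (rule cringI)
  show "abelian_group (neural_ring C)"
    by (rule abelian_groupI) (auto simp: neural_ring_def fun_on_def)
  show "comm_monoid (neural_ring C)"
    by (rule comm_monoidI) (auto simp: neural_ring_def fun_on_def)
qed (auto simp: neural_ring_def)

lemma module_neural_module:
  assumes "C \<subseteq> cube n"
  shows "module (Rn n) (neural_module n C)"
proof (rule moduleI)
  show "cring (Rn n)"
    by (simp add: Rn_def cring_neural_ring)
  show "abelian_group (neural_module n C)"
    by (rule abelian_groupI) (auto simp: neural_module_def fun_on_def)
qed (use assms in \<open>auto simp: Rn_def neural_ring_def neural_module_def fun_on_def\<close>)

lemma Rn_one_add_one: "\<one>\<^bsub>Rn n\<^esub> \<oplus>\<^bsub>Rn n\<^esub> \<one>\<^bsub>Rn n\<^esub> = \<zero>\<^bsub>Rn n\<^esub>"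
  by (simp add: Rn_def neural_ring_def)

lemma xvar_closed: "xvar n i \<in> carrier (Rn n)"
  by (simp add: Rn_def neural_ring_def fun_on_def xvar_def)

lemma finite_cube: "finite (cube n)"
proof (rule finite_subset)
  show "cube n \<subseteq> (\<lambda>S i. i \<in> S) ` Pow {..<n}"
  proof
    fix c assume "c \<in> cube n"
    then have "c = (\<lambda>i. i \<in> {i. i < n \<and> c i})"
      unfolding cube_def by (metis mem_Collect_eq not_le)
    then show "c \<in> (\<lambda>S i. i \<in> S) ` Pow {..<n}"
      by blast
  qed
qed simp

lemma cube_eq_iff:
  assumes "c \<in> cube n" "c' \<in> cube n"
  shows "c = c' \<longleftrightarrow> (\<forall>i<n. c i = c' i)"
proof
  assume "\<forall>i<n. c i = c' i"
  moreover have "\<not> c i \<and> \<not> c' i" if "i \<ge> n" for i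
    using assms that by (simp add: cube_def)
  ultimately show "c = c'"
    by (intro ext) (metis not_le)
qed simp

lemma f2_const_Rn: "f2_const (Rn n) b = (\<lambda>c. b \<and> c \<in> cube n)"
  by (auto simp: f2_const_def Rn_def neural_ring_def)

lemma smult_eq_f2_const_at_codeword:
  assumes "module (Rn n) M" "m \<in> carrier M" "c \<in> cube n"
    and xvar_smult: "\<forall>i<n. xvar n i \<odot>\<^bsub>M\<^esub> m = (if c i then m else \<zero>\<^bsub>M\<^esub>)"
    and r: "r \<in> carrier (Rn n)"
  shows "r \<odot>\<^bsub>M\<^esub> m = f2_const (Rn n) (r c) \<odot>\<^bsub>M\<^esub> m"
proof -
  interpret module "Rn n" M by (rule assms(1))
  \<comment> \<open>e k = \<Prod>i<k. (x_i if c i else 1 + x_i), the indicator of agreeing with c below k\<close>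
  define e where "e k = (\<lambda>c'. c' \<in> cube n \<and> (\<forall>i<k. c' i = c i))" for k
  have e_closed: "e k \<in> carrier (Rn n)" for k
    by (auto simp: Rn_def neural_ring_def fun_on_def e_def)
  have e_smult: "e k \<odot>\<^bsub>M\<^esub> m = m" if "k \<le> n" for k
    using that
  proof (induction k)
    case 0
    have "e 0 = \<one>\<^bsub>Rn n\<^esub>"
      by (simp add: e_def Rn_def neural_ring_def)
    then show ?case
      using assms(2) by simp
  next
    case (Suc k)
    define y where "y = (if c k then xvar n k else \<one>\<^bsub>Rn n\<^esub> \<oplus>\<^bsub>Rn n\<^esub> xvar n k)"
    have k: "k < n"
      using Suc.prems by simp
    have y_closed: "y \<in> carrier (Rn n)"
      by (simp add: y_def xvar_closed)
    have "y \<odot>\<^bsub>M\<^esub> m = m"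
      using xvar_smult k assms(2) xvar_closed by (simp add: y_def smult_l_distr)
    moreover have "e (Suc k) = e k \<otimes>\<^bsub>Rn n\<^esub> y"
      using k by (auto simp: Rn_def neural_ring_def e_def y_def xvar_def less_Suc_eq fun_eq_iff)
    ultimately show ?case
      using Suc smult_assoc1[OF e_closed y_closed assms(2)] by simp
  qed
  have e_n: "e n = (\<lambda>c'. c' = c)"
  proof
    fix c' show "e n c' = (c' = c)"
      using assms(3) cube_eq_iff[of c' n c] by (auto simp: e_def)
  qed
  have "r \<odot>\<^bsub>M\<^esub> m = (r \<otimes>\<^bsub>Rn n\<^esub> e n) \<odot>\<^bsub>M\<^esub> m"
    using e_smult[of n] assms(2) r e_closed by (simp add: smult_assoc1)
  also have "r \<otimes>\<^bsub>Rn n\<^esub> e n = f2_const (Rn n) (r c) \<otimes>\<^bsub>Rn n\<^esub> e n"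
    using assms(3) unfolding f2_const_Rn e_n by (auto simp: Rn_def neural_ring_def)
  also have "(f2_const (Rn n) (r c) \<otimes>\<^bsub>Rn n\<^esub> e n) \<odot>\<^bsub>M\<^esub> m = f2_const (Rn n) (r c) \<odot>\<^bsub>M\<^esub> m"
    using e_smult[of n] assms(2) e_closed by (simp add: smult_assoc1)
  finally show ?thesis .
qed

text \<open>The basis vector \<rho> j plays the role of the indicator of the codeword cw j in R_C.\<close>

definition codeword_basis ::
  "nat \<Rightarrow> ((nat \<Rightarrow> bool) \<Rightarrow> bool, 'a, 'x) module_scheme \<Rightarrow> nat \<Rightarrow> (nat \<Rightarrow> 'a) \<Rightarrow> (nat \<Rightarrow> nat \<Rightarrow> bool) \<Rightarrow> bool"
  where "codeword_basis n M d \<rho> cw \<longleftrightarrow> f2_basis (Rn n) M d \<rho> \<and> inj_on cw {..<d} \<and>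
    (\<forall>j<d. cw j \<in> cube n \<and> (\<forall>i<n. xvar n i \<odot>\<^bsub>M\<^esub> \<rho> j = (if cw j i then \<rho> j else \<zero>\<^bsub>M\<^esub>)))"

lemma f2_basis_separating_iff_codeword_basis:
  assumes "module (Rn n) M"
  shows "f2_basis (Rn n) M d \<rho> \<and>
      (\<forall>i<n. \<forall>j<d. xvar n i \<odot>\<^bsub>M\<^esub> \<rho> j \<in> {\<rho> j, \<zero>\<^bsub>M\<^esub>}) \<and>
      (\<forall>j<d. \<forall>k<d. j \<noteq> k \<longrightarrow>
         (\<exists>i<n. (xvar n i \<odot>\<^bsub>M\<^esub> \<rho> j = \<zero>\<^bsub>M\<^esub>) \<noteq> (xvar n i \<odot>\<^bsub>M\<^esub> \<rho> k = \<zero>\<^bsub>M\<^esub>)))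
     \<longleftrightarrow> (\<exists>cw. codeword_basis n M d \<rho> cw)"
proof
  assume "f2_basis (Rn n) M d \<rho> \<and>
      (\<forall>i<n. \<forall>j<d. xvar n i \<odot>\<^bsub>M\<^esub> \<rho> j \<in> {\<rho> j, \<zero>\<^bsub>M\<^esub>}) \<and>
      (\<forall>j<d. \<forall>k<d. j \<noteq> k \<longrightarrow>
         (\<exists>i<n. (xvar n i \<odot>\<^bsub>M\<^esub> \<rho> j = \<zero>\<^bsub>M\<^esub>) \<noteq> (xvar n i \<odot>\<^bsub>M\<^esub> \<rho> k = \<zero>\<^bsub>M\<^esub>)))"
  then have basis: "f2_basis (Rn n) M d \<rho>"
    and eigen: "\<forall>i<n. \<forall>j<d. xvar n i \<odot>\<^bsub>M\<^esub> \<rho> j \<in> {\<rho> j, \<zero>\<^bsub>M\<^esub>}"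
    and separating: "\<forall>j<d. \<forall>k<d. j \<noteq> k \<longrightarrow>
         (\<exists>i<n. (xvar n i \<odot>\<^bsub>M\<^esub> \<rho> j = \<zero>\<^bsub>M\<^esub>) \<noteq> (xvar n i \<odot>\<^bsub>M\<^esub> \<rho> k = \<zero>\<^bsub>M\<^esub>))"
    by blast+
  interpret f2_based_module "Rn n" M d \<rho>
    using assms basis by (simp add: f2_based_module_def f2_based_module_axioms_def)
  define cw where "cw j = (\<lambda>i. i < n \<and> xvar n i \<odot>\<^bsub>M\<^esub> \<rho> j \<noteq> \<zero>\<^bsub>M\<^esub>)" for j
  have "inj_on cw {..<d}"
  proof (rule inj_onI, rule ccontr)
    fix j k assume "j \<in> {..<d}" "k \<in> {..<d}" "cw j = cw k" "j \<noteq> k"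
    then show False
      using separating by (auto simp: cw_def fun_eq_iff)
  qed
  moreover have "\<forall>j<d. cw j \<in> cube n \<and>
      (\<forall>i<n. xvar n i \<odot>\<^bsub>M\<^esub> \<rho> j = (if cw j i then \<rho> j else \<zero>\<^bsub>M\<^esub>))"
    using eigen basis_nonzero by (auto simp: cw_def cube_def)
  ultimately show "\<exists>cw. codeword_basis n M d \<rho> cw"
    using basis unfolding codeword_basis_def by blast
next
  assume "\<exists>cw. codeword_basis n M d \<rho> cw"
  then obtain cw where basis: "f2_basis (Rn n) M d \<rho>"
    and inj: "inj_on cw {..<d}" and cube: "\<forall>j<d. cw j \<in> cube n"
    and eigen: "\<forall>j<d. \<forall>i<n. xvar n i \<odot>\<^bsub>M\<^esub> \<rho> j = (if cw j i then \<rho> j else \<zero>\<^bsub>M\<^esub>)"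
    unfolding codeword_basis_def by blast
  interpret f2_based_module "Rn n" M d \<rho>
    using assms basis by (simp add: f2_based_module_def f2_based_module_axioms_def)
  have zero_iff: "xvar n i \<odot>\<^bsub>M\<^esub> \<rho> j = \<zero>\<^bsub>M\<^esub> \<longleftrightarrow> \<not> cw j i" if "i < n" "j < d" for i j
    using eigen basis_nonzero that by simp
  have "\<exists>i<n. (xvar n i \<odot>\<^bsub>M\<^esub> \<rho> j = \<zero>\<^bsub>M\<^esub>) \<noteq> (xvar n i \<odot>\<^bsub>M\<^esub> \<rho> k = \<zero>\<^bsub>M\<^esub>)"
    if jk: "j < d" "k < d" "j \<noteq> k" for j k
  proof -
    have "cw j \<noteq> cw k"
      using inj jk by (auto dest: inj_onD)
    then obtain i where "i < n" "cw j i \<noteq> cw k i"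
      using cube_eq_iff cube jk(1,2) by blast
    then show ?thesis
      using zero_iff jk(1,2) by auto
  qed
  then show "f2_basis (Rn n) M d \<rho> \<and>
      (\<forall>i<n. \<forall>j<d. xvar n i \<odot>\<^bsub>M\<^esub> \<rho> j \<in> {\<rho> j, \<zero>\<^bsub>M\<^esub>}) \<and>
      (\<forall>j<d. \<forall>k<d. j \<noteq> k \<longrightarrow>
         (\<exists>i<n. (xvar n i \<odot>\<^bsub>M\<^esub> \<rho> j = \<zero>\<^bsub>M\<^esub>) \<noteq> (xvar n i \<odot>\<^bsub>M\<^esub> \<rho> k = \<zero>\<^bsub>M\<^esub>)))"
    using basis eigen by simp
qed

lemma codeword_basis_smult:
  assumes "module (Rn n) M" "codeword_basis n M d \<rho> cw" "r \<in> carrier (Rn n)" "j < d"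
  shows "r \<odot>\<^bsub>M\<^esub> \<rho> j = f2_const (Rn n) (r (cw j)) \<odot>\<^bsub>M\<^esub> \<rho> j"
proof -
  have "\<rho> j \<in> carrier M" "cw j \<in> cube n"
    "\<forall>i<n. xvar n i \<odot>\<^bsub>M\<^esub> \<rho> j = (if cw j i then \<rho> j else \<zero>\<^bsub>M\<^esub>)"
    using assms(2,4) by (simp_all add: codeword_basis_def f2_basis_def)
  then show ?thesis
    by (rule smult_eq_f2_const_at_codeword[OF assms(1) _ _ _ assms(3)])
qed

lemma module_iso_of_codeword_bases:
  assumes "module (Rn n) M" "module (Rn n) N"
    and "codeword_basis n M d \<rho> cw" "codeword_basis n N d \<sigma> cw"
  shows "\<exists>f. module_iso (Rn n) M N f"
proof -
  interpret f2_based_module "Rn n" M d \<rho>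
    using assms(1,3) by (simp add: f2_based_module_def f2_based_module_axioms_def codeword_basis_def)
  have N: "f2_based_module (Rn n) N d \<sigma>"
    using assms(2,4) by (simp add: f2_based_module_def f2_based_module_axioms_def codeword_basis_def)
  have "module_iso (Rn n) M N (\<lambda>m. f2_comb (Rn n) N d \<sigma> (f2_coords (Rn n) M d \<rho> m))"
    by (rule module_iso_f2_coords[OF Rn_one_add_one N, where \<chi> = "\<lambda>r j. r (cw j)"])
      (use codeword_basis_smult[OF assms(1,3)] codeword_basis_smult[OF assms(2,4)] in blast)+
  then show ?thesis
    by blast
qed

lemma codeword_basis_neural_module:
  assumes inj: "inj_on cw {..<d}" and cube: "\<forall>j<d. cw j \<in> cube n"
  shows "codeword_basis n (neural_module n (cw ` {..<d})) d (\<lambda>j c. c = cw j) cw"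
proof -
  let ?C = "cw ` {..<d}"
  let ?N = "neural_module n ?C"
  let ?\<delta> = "\<lambda>j c. c = cw j"
  interpret N: module "Rn n" ?N
    using cube by (intro module_neural_module) auto
  have \<delta>_closed: "\<forall>j<d. ?\<delta> j \<in> carrier ?N"
    by (auto simp: neural_module_def fun_on_def)
  have smult_\<delta>: "f2_const (Rn n) b \<odot>\<^bsub>?N\<^esub> ?\<delta> j = (\<lambda>c. b \<and> c = cw j)" if "j < d" for b j
    using that cube by (auto simp: f2_const_Rn neural_module_def)
  have finsum: "finsum ?N (\<lambda>j. f2_const (Rn n) (a j) \<odot>\<^bsub>?N\<^esub> ?\<delta> j) A = (\<lambda>c. \<exists>j\<in>A. a j \<and> c = cw j)"
    if "A \<subseteq> {..<d}" for a A
    using finite_subset[OF that finite_lessThan] that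
  proof (induction A rule: finite_induct)
    case empty
    show ?case
      unfolding N.finsum_empty by (simp add: neural_module_def)
  next
    case (insert j A)
    have "cw j \<notin> cw ` A"
      using inj insert by (auto simp: inj_on_def)
    have "finsum ?N (\<lambda>j. f2_const (Rn n) (a j) \<odot>\<^bsub>?N\<^esub> ?\<delta> j) (insert j A) =
        f2_const (Rn n) (a j) \<odot>\<^bsub>?N\<^esub> ?\<delta> j \<oplus>\<^bsub>?N\<^esub>
        finsum ?N (\<lambda>j. f2_const (Rn n) (a j) \<odot>\<^bsub>?N\<^esub> ?\<delta> j) A"
      using insert \<delta>_closed by (intro N.finsum_insert) auto
    also have "\<dots> = (\<lambda>c. (a j \<and> c = cw j) \<noteq> (\<exists>k\<in>A. a k \<and> c = cw k))"
      using insert by (simp add: smult_\<delta>) (simp add: neural_module_def)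
    also have "\<dots> = (\<lambda>c. \<exists>k\<in>insert j A. a k \<and> c = cw k)"
      using \<open>cw j \<notin> cw ` A\<close> by (auto simp: fun_eq_iff)
    finally show ?case .
  qed
  have comb: "f2_comb (Rn n) ?N d ?\<delta> a = (\<lambda>c. \<exists>j<d. a j \<and> c = cw j)" for a
    unfolding f2_comb_def finsum[OF order_refl] by auto
  have comb_at: "f2_comb (Rn n) ?N d ?\<delta> a (cw j) = a j" if "j < d" for a j
    using inj that by (auto simp: comb dest: inj_onD)
  have "f2_basis (Rn n) ?N d ?\<delta>"
    unfolding f2_basis_iff_f2_comb
  proof (intro conjI ballI \<delta>_closed)
    fix h assume "h \<in> carrier ?N"
    then have h_off: "h c \<Longrightarrow> c \<in> ?C" for c
      by (auto simp: neural_module_def fun_on_def)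
    have h: "h = f2_comb (Rn n) ?N d ?\<delta> (restrict (\<lambda>j. h (cw j)) {..<d})"
    proof
      fix c show "h c = f2_comb (Rn n) ?N d ?\<delta> (restrict (\<lambda>j. h (cw j)) {..<d}) c"
        using h_off[of c] by (auto simp: comb)
    qed
    show "\<exists>!a. a \<in> extensional {..<d} \<and> h = f2_comb (Rn n) ?N d ?\<delta> a"
    proof (rule ex1I)
      show "restrict (\<lambda>j. h (cw j)) {..<d} \<in> extensional {..<d} \<and>
          h = f2_comb (Rn n) ?N d ?\<delta> (restrict (\<lambda>j. h (cw j)) {..<d})"
        using h by simp
    next
      fix a assume "a \<in> extensional {..<d} \<and> h = f2_comb (Rn n) ?N d ?\<delta> a"
      then show "a = restrict (\<lambda>j. h (cw j)) {..<d}"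
        by (intro extensionalityI[of _ "{..<d}"]) (auto simp: comb_at)
    qed
  qed
  moreover have "xvar n i \<odot>\<^bsub>?N\<^esub> ?\<delta> j = (if cw j i then ?\<delta> j else \<zero>\<^bsub>?N\<^esub>)" if "j < d" for i j
  proof -
    have "xvar n i \<odot>\<^bsub>?N\<^esub> ?\<delta> j = (\<lambda>c. cw j i \<and> c = cw j)"
      using that cube by (intro ext) (auto simp: neural_module_def xvar_def)
    then show ?thesis
      by (simp add: neural_module_def)
  qed
  ultimately show ?thesis
    using inj cube unfolding codeword_basis_def by blast
qed

lemma codeword_basis_transfer:
  assumes "module (Rn n) M" "module (Rn n) N" "module_iso (Rn n) M N f"
    and "codeword_basis n N d \<sigma> cw" "\<forall>j<d. \<rho> j \<in> carrier M \<and> f (\<rho> j) = \<sigma> j"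
  shows "codeword_basis n M d \<rho> cw"
proof -
  interpret M: module "Rn n" M by (rule assms(1))
  have inj: "inj_on f (carrier M)"
    using assms(3) by (simp add: module_iso_def bij_betw_def)
  have "xvar n i \<odot>\<^bsub>M\<^esub> \<rho> j = (if cw j i then \<rho> j else \<zero>\<^bsub>M\<^esub>)" if "i < n" "j < d" for i j
  proof -
    have "f (xvar n i \<odot>\<^bsub>M\<^esub> \<rho> j) = xvar n i \<odot>\<^bsub>N\<^esub> \<sigma> j"
      using assms(3,5) that xvar_closed by (simp add: module_iso_def)
    also have "\<dots> = f (if cw j i then \<rho> j else \<zero>\<^bsub>M\<^esub>)"
      using assms(4,5) that module_iso_zero[OF assms(1-3)] by (simp add: codeword_basis_def)
    finally show ?thesis
      using inj_onD[OF inj] assms(5) that xvar_closed by simp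
  qed
  moreover have "f2_basis (Rn n) M d \<rho>"
    using assms(4) by (intro f2_basis_transfer[OF assms(1-3) _ assms(5)]) (simp add: codeword_basis_def)
  ultimately show ?thesis
    using assms(4) by (simp add: codeword_basis_def)
qed

lemma neural_module_iso_imp_codeword_basis:
  assumes "module (Rn n) M" "C \<subseteq> cube n" "module_iso (Rn n) M (neural_module n C) f"
  shows "\<exists>d \<rho> cw. codeword_basis n M d \<rho> cw"
proof -
  obtain d :: nat and cw where C: "C = cw ` {..<d}" and inj: "inj_on cw {..<d}"
    using finite_imp_nat_seg_image_inj_on[OF finite_subset[OF assms(2) finite_cube]]
    unfolding lessThan_def by blast
  have cube: "\<forall>j<d. cw j \<in> cube n"
    using assms(2) C by auto
  let ?\<sigma> = "\<lambda>j c. c = cw j"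
  have N: "codeword_basis n (neural_module n C) d ?\<sigma> cw"
    unfolding C by (rule codeword_basis_neural_module[OF inj cube])
  have bij: "bij_betw f (carrier M) (carrier (neural_module n C))"
    using assms(3) by (simp add: module_iso_def)
  define \<rho> where "\<rho> j = inv_into (carrier M) f (?\<sigma> j)" for j
  have \<sigma>_closed: "?\<sigma> j \<in> f ` carrier M" if "j < d" for j
    using f2_basis_closed[OF N[unfolded codeword_basis_def, THEN conjunct1] that]
      bij_betw_imp_surj_on[OF bij] by simp
  have "\<forall>j<d. \<rho> j \<in> carrier M \<and> f (\<rho> j) = ?\<sigma> j"
    using \<sigma>_closed by (simp add: \<rho>_def inv_into_into f_inv_into_f)
  then have "codeword_basis n M d \<rho> cw"
    by (rule codeword_basis_transfer[OF assms(1) module_neural_module[OF assms(2)] assms(3) N])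
  then show ?thesis
    by (intro exI)
qed

theorem theorem2:
  fixes n :: nat
    and M :: "((nat \<Rightarrow> bool) \<Rightarrow> bool, 'a, 'x) module_scheme"
  assumes "n \<ge> 1"
    and "module (Rn n) M"
  shows "(\<exists>C f. C \<subseteq> cube n \<and> module_iso (Rn n) M (neural_module n C) f) \<longleftrightarrow>
         (\<exists>d \<rho>. f2_basis (Rn n) M d \<rho> \<and>
            (\<forall>i<n. \<forall>j<d. xvar n i \<odot>\<^bsub>M\<^esub> \<rho> j \<in> {\<rho> j, \<zero>\<^bsub>M\<^esub>}) \<and>
            (\<forall>j<d. \<forall>k<d. j \<noteq> k \<longrightarrow>
               (\<exists>i<n. (xvar n i \<odot>\<^bsub>M\<^esub> \<rho> j = \<zero>\<^bsub>M\<^esub>) \<noteq> (xvar n i \<odot>\<^bsub>M\<^esub> \<rho> k = \<zero>\<^bsub>M\<^esub>))))"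
    (is "?iso \<longleftrightarrow> ?basis")
proof -
  have "?basis \<longleftrightarrow> (\<exists>d \<rho> cw. codeword_basis n M d \<rho> cw)"
    unfolding f2_basis_separating_iff_codeword_basis[OF assms(2)] ..
  also have "\<dots> \<longleftrightarrow> ?iso"
  proof
    assume "\<exists>d \<rho> cw. codeword_basis n M d \<rho> cw"
    then obtain d \<rho> cw where M: "codeword_basis n M d \<rho> cw"
      by blast
    then have inj: "inj_on cw {..<d}" and cube: "\<forall>j<d. cw j \<in> cube n"
      by (simp_all add: codeword_basis_def)
    then have C: "cw ` {..<d} \<subseteq> cube n"
      by auto
    have "\<exists>f. module_iso (Rn n) M (neural_module n (cw ` {..<d})) f"
      by (rule module_iso_of_codeword_bases[OF assms(2) module_neural_module[OF C] M
            codeword_basis_neural_module[OF inj cube]])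
    then show ?iso
      using C by blast
  next
    assume ?iso
    then show "\<exists>d \<rho> cw. codeword_basis n M d \<rho> cw"
      using neural_module_iso_imp_codeword_basis[OF assms(2)] by blast
  qed
  finally show ?thesis
    by blast
qed

end
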